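(* Let $p,q$ be positive integers and $k,\ell$ positive integers with $k\le \ell$, and let $A=\{a_1<\cdots<a_p\}$, $B=\{b_1<\cdots<b_q\}$ be linearly ordered sets. Fix indices $i_1,\dots,i_{k-1}\in\{1,\dots,p\}$, and let $(G;A,B)$ be the ordered bipartite graph with edge set $$\{a_ib_j: 1\le i\le p,\ 1\le j\le \ell-1\}\cup\{a_{i_h}b_j: \ell\le j\le q,\ 1\le h\le k-1\}.$$ Suppose $k\le p$, $\ell\le q$ and $k\le p\le \ell-1$. Then (i) $(G;A,B)$ is $K_{k,\ell}$-interval minor free; (ii) $m(p,q,k,\ell)\geq (\ell-1)(p-k+1)+q(k-1)$.
   Context: An ordered bipartite graph $(G;A,B)$ is a simple bipartite graph $G$ with parts $A,B$, each equipped with a linear order. Two vertices $u<v$ of the same part are consecutive if no vertex $w$ of that part satisfies $u<w<v$. Identifying two consecutive vertices $u,v$ of a part replaces them by a single vertex $w$ (in their position in the order) with $N(w)=N(u)\cup N(v)$; the result is again a simple ordered bipartite graph. Two ordered bipartite graphs are isomorphic if there is a graph isomorphism between them mapping parts to parts (possibly exchanging the two parts) and preserving the linear orders of the parts. An ordered bipartite graph $H$ is an interval minor of $G$ if a graph isomorphic to $H$ can be obtained from $G$ by repeatedly deleting edges and identifying two consecutive vertices; $G$ is $H$-interval minor free otherwise. $m(p,q,k,\ell)$ denotes the maximum number of edges of an ordered bipartite graph with parts of sizes $p$ and $q$ that is $K_{k,\ell}$-interval minor free. *)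

theory Defs
  imports Main
begin

text \<open>An ordered bipartite graph is represented canonically as (p, q, E):
  part A = {0..<p} and part B = {0..<q}, each with the natural order,
  and E \<subseteq> {0..<p} \<times> {0..<q} the edge set (an edge (i,j) joins a_i and b_j).\<close>

type_synonym obg = "nat \<times> nat \<times> (nat \<times> nat) set"

definition obg_wf :: "obg \<Rightarrow> bool" where
  "obg_wf G = (case G of (p, q, E) \<Rightarrow> E \<subseteq> {0..<p} \<times> {0..<q})"

text \<open>Index map when the consecutive vertices i and i+1 are identified into one vertex
  placed at position i (vertices after i+1 shift down by one).\<close>
definition merge_idx :: "nat \<Rightarrow> nat \<Rightarrow> nat" where
  "merge_idx i x = (if x \<le> i then x else x - 1)"

inductive obg_step :: "obg \<Rightarrow> obg \<Rightarrow> bool" where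
  del_edge: "e \<in> E \<Longrightarrow> obg_step (p, q, E) (p, q, E - {e})"
| ident_A: "Suc i < p \<Longrightarrow>
     obg_step (p, q, E) (p - 1, q, (\<lambda>(a, b). (merge_idx i a, b)) ` E)"
| ident_B: "Suc j < q \<Longrightarrow>
     obg_step (p, q, E) (p, q - 1, (\<lambda>(a, b). (a, merge_idx j b)) ` E)"

text \<open>Isomorphism of ordered bipartite graphs (parts may be exchanged; order-preserving
  bijections between {0..<n} are identities).\<close>
definition obg_iso :: "obg \<Rightarrow> obg \<Rightarrow> bool" where
  "obg_iso G H = (case G of (p, q, E) \<Rightarrow> case H of (p', q', E') \<Rightarrow>
      (p = p' \<and> q = q' \<and> E = E') \<or> (p = q' \<and> q = p' \<and> E' = prod.swap ` E))"

definition interval_minor :: "obg \<Rightarrow> obg \<Rightarrow> bool" where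
  "interval_minor H G = (\<exists>G'. obg_step\<^sup>*\<^sup>* G G' \<and> obg_iso H G')"

definition K_obg :: "nat \<Rightarrow> nat \<Rightarrow> obg" where
  "K_obg k l = (k, l, {0..<k} \<times> {0..<l})"

definition m_fun :: "nat \<Rightarrow> nat \<Rightarrow> nat \<Rightarrow> nat \<Rightarrow> nat" where
  "m_fun p q k l = Max {card E | E. E \<subseteq> {0..<p} \<times> {0..<q} \<and>
                                   \<not> interval_minor (K_obg k l) (p, q, E)}"

end

theory Submission
  imports Defs
begin

text \<open>Deleting edges and identifying consecutive vertices never increase the number of
  vertices of A, nor the number of vertices of A adjacent to some vertex of B at position
  at least l - 1 (an identification in A may only merge such vertices, one in B only moves
  B-vertices to the left). In the graph of the theorem A has p < l vertices and only the
  k - 1 vertices a_{i_h} reach that far, whereas K_{k,l} has either l vertices in A (parts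
  exchanged) or k vertices of A adjacent to its last B-vertex. For (ii), take
  i_h = h, which makes the k - 1 indices distinct.\<close>

definition tail_rows :: "nat \<Rightarrow> obg \<Rightarrow> nat set" where
  "tail_rows c G = {a. \<exists>b. (a, b) \<in> snd (snd G) \<and> c \<le> b}"

lemma merge_idx_le: "merge_idx i x \<le> x"
  unfolding merge_idx_def by simp

lemma obg_step_fst_le: "obg_step G H \<Longrightarrow> fst H \<le> fst G"
  by (induction rule: obg_step.induct) auto

lemma obg_steps_fst_le: "obg_step\<^sup>*\<^sup>* G H \<Longrightarrow> fst H \<le> fst G"
  by (induction rule: rtranclp_induct) (auto dest: obg_step_fst_le)

lemma tail_rows_map_prod:
  assumes "\<And>b. g b \<le> b"
  shows "tail_rows c (p', q', map_prod f g ` E) \<subseteq> f ` tail_rows c (p, q, E)"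
proof
  fix a assume "a \<in> tail_rows c (p', q', map_prod f g ` E)"
  then obtain a0 b where "(a0, b) \<in> E" "c \<le> g b" "a = f a0"
    unfolding tail_rows_def by auto
  moreover have "c \<le> b"
    using \<open>c \<le> g b\<close> assms by (rule le_trans)
  ultimately show "a \<in> f ` tail_rows c (p, q, E)"
    unfolding tail_rows_def by auto
qed

lemma obg_step_tail_rows: "obg_step G H \<Longrightarrow> \<exists>f. tail_rows c H \<subseteq> f ` tail_rows c G"
proof (induction rule: obg_step.induct)
  case (del_edge e E p q)
  have "tail_rows c (p, q, E - {e}) \<subseteq> id ` tail_rows c (p, q, E)"
    unfolding tail_rows_def by auto
  then show ?case by blast
next
  case (ident_A i p q E)
  have "(\<lambda>(a, b). (merge_idx i a, b)) = map_prod (merge_idx i) id"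
    by auto
  then show ?case using tail_rows_map_prod[of id] by (metis id_apply order_refl)
next
  case (ident_B j q p E)
  have "(\<lambda>(a, b). (a, merge_idx j b)) = map_prod id (merge_idx j)"
    by auto
  then show ?case using tail_rows_map_prod[of "merge_idx j"] merge_idx_le by metis
qed

lemma obg_steps_tail_rows_card:
  assumes "obg_step\<^sup>*\<^sup>* G H" and "finite (tail_rows c G)"
  shows "finite (tail_rows c H) \<and> card (tail_rows c H) \<le> card (tail_rows c G)"
  using assms(1)
proof (induction rule: rtranclp_induct)
  case base
  show ?case using assms(2) by simp
next
  case (step H H')
  then obtain f where "tail_rows c H' \<subseteq> f ` tail_rows c H"
    using obg_step_tail_rows by blast
  with step.IH show ?case
    by (meson card_image_le card_mono finite_imageI finite_subset le_trans)
qed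

lemma not_interval_minor_K_obg:
  assumes "0 < l" and "fst G < l"
    and "finite (tail_rows (l - 1) G)" and "card (tail_rows (l - 1) G) < k"
  shows "\<not> interval_minor (K_obg k l) G"
proof
  assume "interval_minor (K_obg k l) G"
  then obtain H where steps: "obg_step\<^sup>*\<^sup>* G H" and iso: "obg_iso (K_obg k l) H"
    unfolding interval_minor_def by blast
  obtain p q E where H: "H = (p, q, E)" by (cases H) auto
  have "fst H < l" using obg_steps_fst_le[OF steps] assms(2) by simp
  with iso have "H = K_obg k l"
    unfolding H obg_iso_def K_obg_def by auto
  then have "tail_rows (l - 1) H = {0..<k}"
    using assms(1) unfolding tail_rows_def K_obg_def by (auto intro: exI[of _ "l - 1"])
  with obg_steps_tail_rows_card[OF steps assms(3)] assms(4) show False by simp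
qed

lemma card_le_m_fun:
  assumes "E \<subseteq> {0..<p} \<times> {0..<q}" and "\<not> interval_minor (K_obg k l) (p, q, E)"
  shows "card E \<le> m_fun p q k l"
proof -
  let ?M = "{card E | E. E \<subseteq> {0..<p} \<times> {0..<q} \<and> \<not> interval_minor (K_obg k l) (p, q, E)}"
  have "?M \<subseteq> card ` Pow ({0..<p} \<times> {0..<q})" by auto
  then have "finite ?M" by (rule finite_subset) simp
  moreover have "card E \<in> ?M" using assms by blast
  ultimately show ?thesis unfolding m_fun_def by (rule Max_ge)
qed

lemma card_staircase:
  fixes p q k m :: nat
  assumes "0 < k" and "k \<le> p" and "m \<le> q"
  shows "card ({0..<p} \<times> {0..<m} \<union> {0..<k - 1} \<times> {m..<q}) = m * (p - k + 1) + q * (k - 1)"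
proof -
  obtain c where c: "k = Suc c" using \<open>0 < k\<close> gr0_implies_Suc by blast
  obtain a where a: "p = k + a" using \<open>k \<le> p\<close> le_Suc_ex by blast
  obtain b where b: "q = m + b" using \<open>m \<le> q\<close> le_Suc_ex by blast
  have "card ({0..<p} \<times> {0..<m} \<union> {0..<k - 1} \<times> {m..<q}) = p * m + (k - 1) * (q - m)"
    by (subst card_Un_disjoint) auto
  also have "\<dots> = m * (p - k + 1) + q * (k - 1)"
    unfolding a b c by (simp add: algebra_simps)
  finally show ?thesis .
qed

theorem lemma2p3:
  fixes p q k l :: nat and ih :: "nat \<Rightarrow> nat"
  assumes "0 < p" and "0 < q" and "0 < k" and "0 < l" and "k \<le> l"
    and "\<forall>h < k - 1. ih h < p"
    and "k \<le> p" and "l \<le> q" and "p \<le> l - 1"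
  shows "\<not> interval_minor (K_obg k l)
            (p, q, {(i, j). i < p \<and> j < l - 1} \<union>
                   {(ih h, j) | h j. h < k - 1 \<and> l - 1 \<le> j \<and> j < q})
         \<and> m_fun p q k l \<ge> (l - 1) * (p - k + 1) + q * (k - 1)"
proof -
  define E :: "(nat \<Rightarrow> nat) \<Rightarrow> (nat \<times> nat) set" where
    "E r = {(i, j). i < p \<and> j < l - 1} \<union> {(r h, j) | h j. h < k - 1 \<and> l - 1 \<le> j \<and> j < q}" for r
  have free: "\<not> interval_minor (K_obg k l) (p, q, E r)" for r
  proof (rule not_interval_minor_K_obg)
    have rows: "tail_rows (l - 1) (p, q, E r) \<subseteq> r ` {..<k - 1}"
      unfolding tail_rows_def E_def by auto
    then show "finite (tail_rows (l - 1) (p, q, E r))"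
      by (rule finite_subset) simp
    have "card (tail_rows (l - 1) (p, q, E r)) \<le> card (r ` {..<k - 1})"
      using rows by (rule card_mono[rotated]) simp
    also have "\<dots> \<le> k - 1"
      using card_image_le[of "{..<k - 1}" r] by simp
    finally show "card (tail_rows (l - 1) (p, q, E r)) < k"
      using \<open>0 < k\<close> by simp
  qed (use assms in simp_all)
  have E_id: "E id = {0..<p} \<times> {0..<l - 1} \<union> {0..<k - 1} \<times> {l - 1..<q}"
    unfolding E_def by auto
  have "card (E id) = (l - 1) * (p - k + 1) + q * (k - 1)"
    unfolding E_id using assms by (intro card_staircase) simp_all
  moreover have "E id \<subseteq> {0..<p} \<times> {0..<q}"
    unfolding E_id using assms by auto
  then have "card (E id) \<le> m_fun p q k l"
    using free[of id] by (rule card_le_m_fun)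
  ultimately have "(l - 1) * (p - k + 1) + q * (k - 1) \<le> m_fun p q k l"
    by simp
  with free[of ih] show ?thesis
    unfolding E_def by blast
qed

end
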